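(* For every integer $k\ge0$ there exist symmetric polynomials $\phi_i^k(y_1,\dots,y_i)$ for $1\le i\le k+2$ and symmetric polynomials $\varphi_j^k(y_1,\dots,y_j)$ for $2\le j\le k+2$ such that $$\phi_1^k=1,\quad\phi_{k+1}^k=1,\quad\phi_{k+2}^k=0,\qquad \varphi_2^k(y_1,y_2)=\sum_{i=0}^ky_1^iy_2^{k-i},\quad\varphi_{k+2}^k=1,$$ and for every $1\le i\le k+1$, $$\phi_i^k(y_1,\dots,y_i)\,y_{i+1}^{k+2-i}-\varphi_{i+1}^k(y_1,\dots,y_{i+1})\,y_{i+1}=-\phi_{i+1}^k(y_1,\dots,y_{i+1})\,y_1y_2\cdots y_{i+1}.$$
   Context: A symmetric polynomial in variables $y_1,\dots,y_n$ is a polynomial (with real coefficients) invariant under every permutation of the variables. *)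

theory Defs
  imports Complex_Main "HOL-Combinatorics.Permutations"
begin

text \<open>Real polynomial functions in the variables y_1..y_n, where variable y_(m+1)
  is represented by coordinate m of a point y :: nat => real. Over the reals,
  polynomial functions and polynomials correspond bijectively.\<close>
inductive mpoly_fun :: "nat \<Rightarrow> ((nat \<Rightarrow> real) \<Rightarrow> real) \<Rightarrow> bool" for n :: nat where
  const: "mpoly_fun n (\<lambda>y. c)"
| var: "i < n \<Longrightarrow> mpoly_fun n (\<lambda>y. y i)"
| add: "mpoly_fun n f \<Longrightarrow> mpoly_fun n g \<Longrightarrow> mpoly_fun n (\<lambda>y. f y + g y)"
| mult: "mpoly_fun n f \<Longrightarrow> mpoly_fun n g \<Longrightarrow> mpoly_fun n (\<lambda>y. f y * g y)"

definition sym_mpoly :: "nat \<Rightarrow> ((nat \<Rightarrow> real) \<Rightarrow> real) \<Rightarrow> bool" where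
  "sym_mpoly n f \<longleftrightarrow> mpoly_fun n f \<and>
     (\<forall>\<sigma>. \<sigma> permutes {..<n} \<longrightarrow> (\<forall>y. f (y \<circ> \<sigma>) = f y))"

end

theory Submission
  imports Defs
begin

text \<open>All the polynomials come from one family
  Q(n,m) = (y_0 \<cdots> y_(n-1))^m h_m(1/y_0, \<dots>, 1/y_(n-1)), with h_m the complete homogeneous
  symmetric polynomial: take \<phi>_i = Q(i, k+1-i) and \<psi>_j = Q(j, k+2-j). Splitting the
  monomials of Q(n+1,m+1) according to whether y_n occurs in the corresponding monomial of
  h_(m+1) gives the recurrence Q(n+1,m+1) = Q(n,m+1) y_n^(m+1) + Q(n+1,m) y_0 \<cdots> y_(n-1),
  which, multiplied by y_n, is exactly the required identity.\<close>

lemma mpoly_fun_power: "mpoly_fun n f \<Longrightarrow> mpoly_fun n (\<lambda>y. f y ^ k)"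
proof (induction k)
  case 0
  then show ?case using mpoly_fun.const[of n 1] by simp
next
  case (Suc k)
  then show ?case using mpoly_fun.mult[OF Suc.prems Suc.IH] by simp
qed

lemma mpoly_fun_sum:
  "finite A \<Longrightarrow> (\<And>a. a \<in> A \<Longrightarrow> mpoly_fun n (f a)) \<Longrightarrow> mpoly_fun n (\<lambda>y. \<Sum>a\<in>A. f a y)"
proof (induction A rule: finite_induct)
  case empty
  then show ?case using mpoly_fun.const[of n 0] by simp
next
  case (insert x F)
  then show ?case using mpoly_fun.add[of n "f x" "\<lambda>y. \<Sum>a\<in>F. f a y"] by simp
qed

lemma mpoly_fun_prod:
  "finite A \<Longrightarrow> (\<And>a. a \<in> A \<Longrightarrow> mpoly_fun n (f a)) \<Longrightarrow> mpoly_fun n (\<lambda>y. \<Prod>a\<in>A. f a y)"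
proof (induction A rule: finite_induct)
  case empty
  then show ?case using mpoly_fun.const[of n 1] by simp
next
  case (insert x F)
  then show ?case using mpoly_fun.mult[of n "f x" "\<lambda>y. \<Prod>a\<in>F. f a y"] by simp
qed

lemma sym_mpoly_const: "sym_mpoly n (\<lambda>y. c)"
  unfolding sym_mpoly_def by (simp add: mpoly_fun.const)

definition weak_compositions :: "nat \<Rightarrow> nat \<Rightarrow> (nat \<Rightarrow> nat) set" where
  "weak_compositions n m = {a. (\<forall>j\<ge>n. a j = 0) \<and> sum a {..<n} = m}"

lemma weak_compositions_le: "a \<in> weak_compositions n m \<Longrightarrow> a j \<le> m"
  unfolding weak_compositions_def
  by (cases "j < n") (auto intro!: member_le_sum[of _ "{..<n}" a, simplified])

lemma finite_weak_compositions: "finite (weak_compositions n m)"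
proof -
  let ?extend = "\<lambda>f j. if j < n then f j else (0::nat)"
  have "weak_compositions n m \<subseteq> ?extend ` ({..<n} \<rightarrow>\<^sub>E {..m})"
  proof
    fix a assume a: "a \<in> weak_compositions n m"
    then have "a = ?extend (restrict a {..<n})"
      by (auto simp: weak_compositions_def fun_eq_iff)
    moreover have "restrict a {..<n} \<in> {..<n} \<rightarrow>\<^sub>E {..m}"
      using weak_compositions_le[OF a] by simp
    ultimately show "a \<in> ?extend ` ({..<n} \<rightarrow>\<^sub>E {..m})" by blast
  qed
  then show ?thesis by (rule finite_subset) (simp add: finite_PiE)
qed

lemma weak_compositions_zero: "weak_compositions n 0 = {\<lambda>_. 0}"
  by (auto simp: weak_compositions_def fun_eq_iff) (metis lessThan_iff not_le)

lemma weak_compositions_one: "weak_compositions (Suc 0) m = {(\<lambda>_. 0)(0 := m)}"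
  by (auto simp: weak_compositions_def fun_eq_iff)

lemma weak_compositions_permute:
  assumes "\<sigma> permutes {..<n}" and "a \<in> weak_compositions n m"
  shows "a \<circ> \<sigma> \<in> weak_compositions n m"
proof -
  have "sum (a \<circ> \<sigma>) {..<n} = sum a {..<n}"
    using sum.permute[OF assms(1), of a] by simp
  then show ?thesis
    using assms permutes_not_in[OF assms(1)] by (auto simp: weak_compositions_def)
qed

lemma sum_weak_compositions_permute:
  assumes \<sigma>: "\<sigma> permutes {..<n}"
  shows "(\<Sum>a\<in>weak_compositions n m. \<Prod>j<n. f (y (\<sigma> j)) (a j))
       = (\<Sum>a\<in>weak_compositions n m. \<Prod>j<n. f (y j) (a j))"
proof -
  have \<sigma>': "inv \<sigma> permutes {..<n}" using \<sigma> by (rule permutes_inv)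
  have "bij_betw (\<lambda>a. a \<circ> inv \<sigma>) (weak_compositions n m) (weak_compositions n m)"
  proof (rule bij_betw_byWitness[where f' = "\<lambda>a. a \<circ> \<sigma>"])
    show "\<forall>a\<in>weak_compositions n m. a \<circ> inv \<sigma> \<circ> \<sigma> = a"
      "\<forall>a\<in>weak_compositions n m. a \<circ> \<sigma> \<circ> inv \<sigma> = a"
      by (simp_all add: o_assoc[symmetric] permutes_inv_o[OF \<sigma>])
    show "(\<lambda>a. a \<circ> inv \<sigma>) ` weak_compositions n m \<subseteq> weak_compositions n m"
      "(\<lambda>a. a \<circ> \<sigma>) ` weak_compositions n m \<subseteq> weak_compositions n m"
      using weak_compositions_permute[OF \<sigma>] weak_compositions_permute[OF \<sigma>'] by auto
  qed
  then have "(\<Sum>a\<in>weak_compositions n m. \<Prod>j<n. f (y j) ((a \<circ> inv \<sigma>) j))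
           = (\<Sum>a\<in>weak_compositions n m. \<Prod>j<n. f (y j) (a j))"
    by (rule sum.reindex_bij_betw)
  moreover have "(\<Prod>j<n. f (y (\<sigma> j)) (a j)) = (\<Prod>j<n. f (y j) ((a \<circ> inv \<sigma>) j))" for a
    using prod.permutes_inv[OF \<sigma>, of "\<lambda>j i. f (y j) (a i)"] by simp
  ultimately show ?thesis by simp
qed

lemma weak_compositions_Suc_last_zero:
  "{a \<in> weak_compositions (Suc n) m. a n = 0} = weak_compositions n m"
  unfolding weak_compositions_def
  by (auto simp: le_Suc_eq) (metis le_antisym not_less_eq_eq)

lemma weak_compositions_Suc_last_pos:
  "{a \<in> weak_compositions (Suc n) (Suc m). a n \<noteq> 0}
     = (\<lambda>b. b(n := Suc (b n))) ` weak_compositions (Suc n) m"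
proof -
  have [simp]: "sum (a(n := x)) {..<n} = sum a {..<n}" for a :: "nat \<Rightarrow> nat" and x
    by (intro sum.cong) auto
  show ?thesis
  proof (intro equalityI subsetI)
    fix a assume a: "a \<in> {a \<in> weak_compositions (Suc n) (Suc m). a n \<noteq> 0}"
    then have "a = (a(n := a n - 1))(n := Suc ((a(n := a n - 1)) n))"
      by (auto simp: fun_eq_iff)
    moreover have "a(n := a n - 1) \<in> weak_compositions (Suc n) m"
      using a by (auto simp: weak_compositions_def)
    ultimately show "a \<in> (\<lambda>b. b(n := Suc (b n))) ` weak_compositions (Suc n) m"
      by blast
  qed (auto simp: weak_compositions_def)
qed

lemma inj_on_increment: "inj_on (\<lambda>b::nat \<Rightarrow> nat. b(n := Suc (b n))) A"
proof (rule inj_onI)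
  fix a b :: "nat \<Rightarrow> nat"
  assume eq: "a(n := Suc (a n)) = b(n := Suc (b n))"
  then have "a n = b n" by (metis fun_upd_same nat.inject)
  with eq show "a = b" by (metis fun_upd_triv fun_upd_upd)
qed

text \<open>The exponent m - a j is the degree of y_j in (y_0 \<cdots> y_(n-1))^m \<Prod> y_j^(-a j).\<close>
definition dual_complete_hom :: "nat \<Rightarrow> nat \<Rightarrow> (nat \<Rightarrow> real) \<Rightarrow> real" where
  "dual_complete_hom n m y = (\<Sum>a\<in>weak_compositions n m. \<Prod>j<n. y j ^ (m - a j))"

lemma sym_mpoly_dual_complete_hom: "sym_mpoly n (dual_complete_hom n m)"
  unfolding sym_mpoly_def
proof (intro conjI allI impI)
  show "mpoly_fun n (dual_complete_hom n m)"
    unfolding dual_complete_hom_def[abs_def]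
    by (intro mpoly_fun_sum mpoly_fun_prod mpoly_fun_power mpoly_fun.var
        finite_weak_compositions) auto
next
  fix \<sigma> y assume "\<sigma> permutes {..<n}"
  then show "dual_complete_hom n m (y \<circ> \<sigma>) = dual_complete_hom n m y"
    using sum_weak_compositions_permute[where f = "\<lambda>x e. x ^ (m - e)" and y = y]
    by (simp add: dual_complete_hom_def)
qed

lemma dual_complete_hom_zero [simp]: "dual_complete_hom n 0 y = 1"
  by (simp add: dual_complete_hom_def weak_compositions_zero)

lemma dual_complete_hom_one [simp]: "dual_complete_hom (Suc 0) m y = 1"
  unfolding dual_complete_hom_def weak_compositions_one by simp

lemma dual_complete_hom_Suc_Suc:
  "dual_complete_hom (Suc n) (Suc m) y
     = dual_complete_hom n (Suc m) y * y n ^ Suc m + dual_complete_hom (Suc n) m y * (\<Prod>j<n. y j)"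
proof -
  define F where "F a = (\<Prod>j<Suc n. y j ^ (Suc m - a j))" for a
  let ?W = "weak_compositions (Suc n) (Suc m)"
  let ?increment = "\<lambda>b::nat \<Rightarrow> nat. b(n := Suc (b n))"
  have "dual_complete_hom (Suc n) (Suc m) y
      = sum F {a \<in> ?W. a n = 0} + sum F {a \<in> ?W. a n \<noteq> 0}"
  proof -
    have "?W = {a \<in> ?W. a n = 0} \<union> {a \<in> ?W. a n \<noteq> 0}" by blast
    then show ?thesis
      unfolding dual_complete_hom_def F_def[symmetric]
      by (metis (no_types, lifting) sum.union_disjoint finite_weak_compositions finite_Un
          disjoint_iff mem_Collect_eq)
  qed
  moreover have "sum F {a \<in> ?W. a n = 0} = dual_complete_hom n (Suc m) y * y n ^ Suc m"
    unfolding weak_compositions_Suc_last_zero dual_complete_hom_def sum_distrib_right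
    by (intro sum.cong) (auto simp: F_def weak_compositions_def)
  moreover have "F (?increment b) = (\<Prod>j<Suc n. y j ^ (m - b j)) * (\<Prod>j<n. y j)"
    if "b \<in> weak_compositions (Suc n) m" for b
  proof -
    have "F (?increment b) = (\<Prod>j<n. y j ^ (m - b j) * y j) * y n ^ (m - b n)"
      using weak_compositions_le[OF that]
      by (auto simp: F_def Suc_diff_le mult.commute intro!: prod.cong)
    then show ?thesis by (simp add: prod.distrib)
  qed
  then have "sum F {a \<in> ?W. a n \<noteq> 0} = dual_complete_hom (Suc n) m y * (\<Prod>j<n. y j)"
    unfolding weak_compositions_Suc_last_pos sum.reindex[OF inj_on_increment]
      dual_complete_hom_def sum_distrib_right
    by (intro sum.cong) auto
  ultimately show ?thesis by simp
qed

lemma dual_complete_hom_relation: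
  "dual_complete_hom n (Suc m) y * y n ^ Suc (Suc m) - dual_complete_hom (Suc n) (Suc m) y * y n
     = - dual_complete_hom (Suc n) m y * (\<Prod>j<Suc n. y j)"
  by (simp add: dual_complete_hom_Suc_Suc algebra_simps)

lemma dual_complete_hom_two:
  "dual_complete_hom 2 k y = (\<Sum>i=0..k. y 0 ^ i * y 1 ^ (k - i))"
proof (induction k)
  case 0
  then show ?case by simp
next
  case (Suc k)
  have "dual_complete_hom 2 (Suc k) y = y 1 ^ Suc k + dual_complete_hom 2 k y * y 0"
    using dual_complete_hom_Suc_Suc[of 1 k y, unfolded Suc_1] by simp
  also have "\<dots> = (\<Sum>i=0..Suc k. y 0 ^ i * y 1 ^ (Suc k - i))"
    unfolding Suc.IH atLeast0AtMost sum.atMost_Suc_shift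
    by (simp add: sum_distrib_left sum_distrib_right mult_ac)
  finally show ?case .
qed

theorem mainTheorem18:
  fixes k :: nat
  shows "\<exists>(\<phi> :: nat \<Rightarrow> (nat \<Rightarrow> real) \<Rightarrow> real) (\<psi> :: nat \<Rightarrow> (nat \<Rightarrow> real) \<Rightarrow> real).
     (\<forall>i\<in>{1..k+2}. sym_mpoly i (\<phi> i)) \<and>
     (\<forall>j\<in>{2..k+2}. sym_mpoly j (\<psi> j)) \<and>
     \<phi> 1 = (\<lambda>y. 1) \<and> \<phi> (k+1) = (\<lambda>y. 1) \<and> \<phi> (k+2) = (\<lambda>y. 0) \<and>
     \<psi> 2 = (\<lambda>y. \<Sum>i=0..k. y 0 ^ i * y 1 ^ (k - i)) \<and> \<psi> (k+2) = (\<lambda>y. 1) \<and>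
     (\<forall>i\<in>{1..k+1}. \<forall>y.
        \<phi> i y * y i ^ (k + 2 - i) - \<psi> (i+1) y * y i = - \<phi> (i+1) y * (\<Prod>j<i+1. y j))"
proof (intro exI conjI ballI allI)
  define \<phi> where "\<phi> i = (if i \<le> k + 1 then dual_complete_hom i (k + 1 - i) else (\<lambda>y. 0))" for i
  define \<psi> where "\<psi> j = dual_complete_hom j (k + 2 - j)" for j
  show "sym_mpoly i (\<phi> i)" for i
    by (simp add: \<phi>_def sym_mpoly_dual_complete_hom sym_mpoly_const)
  show "sym_mpoly j (\<psi> j)" for j
    by (simp add: \<psi>_def sym_mpoly_dual_complete_hom)
  show "\<phi> 1 = (\<lambda>y. 1)" "\<phi> (k+1) = (\<lambda>y. 1)" "\<phi> (k+2) = (\<lambda>y. 0)" "\<psi> (k+2) = (\<lambda>y. 1)"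
    by (simp_all add: \<phi>_def \<psi>_def fun_eq_iff)
  show "\<psi> 2 = (\<lambda>y. \<Sum>i=0..k. y 0 ^ i * y 1 ^ (k - i))"
    by (simp add: \<psi>_def dual_complete_hom_two fun_eq_iff)
  show "\<phi> i y * y i ^ (k + 2 - i) - \<psi> (i+1) y * y i = - \<phi> (i+1) y * (\<Prod>j<i+1. y j)"
    if "i \<in> {1..k+1}" for i y
  proof (cases "i = k + 1")
    case True
    then show ?thesis by (simp add: \<phi>_def \<psi>_def)
  next
    case False
    with that have "k + 1 - i = Suc (k - i)" "k + 2 - i = Suc (Suc (k - i))"
      "k + 2 - (i + 1) = Suc (k - i)" "i + 1 \<le> k + 1"
      by auto
    then show ?thesis
      using dual_complete_hom_relation[of i "k - i" y] by (simp add: \<phi>_def \<psi>_def)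
  qed
qed

end
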